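(* Let $G$ be a topological group and $A$ a topological $G$-module. Then the inclusion $j_h^*\colon C_{lc}^*(G,A)\hookrightarrow \mathrm{Tot}\,A_{lc}^{*,*}(G,A)^G$ induces an isomorphism in cohomology.
   Context: A topological $G$-module is an abelian topological group $A$ with an action of $G$ by group automorphisms such that the action map $G\times A\to A$ is continuous. For an identity neighbourhood $U$ of $G$ put $\Gamma_U^0:=G$ and, for $p\ge 1$, $\Gamma_U^p:=\{(g_0,\dots,g_p)\in G^{p+1}\mid g_i^{-1}g_j\in U \text{ for all } 0\le i,j\le p\}$. The group $G$ acts on maps $f\colon G^{n+1}\to A$ by $(g.f)(g_0,\dots,g_n)=g.\big(f(g^{-1}g_0,\dots,g^{-1}g_n)\big)$; the fixed points are the equivariant (homogeneous) cochains, with the differential $df(g_0,\dots,g_{n+1})=\sum_{i=0}^{n+1}(-1)^i f(g_0,\dots,\widehat{g_i},\dots,g_{n+1})$. $C_{lc}^n(G,A)$ denotes the group of $G$-equivariant maps $f\colon G^{n+1}\to A$ whose restriction to $\Gamma_U^n$ is continuous for some identity neighbourhood $U$. For $p,q\ge 0$, $A_{lc}^{p,q}(G,A)$ is the group of maps $f\colon G^{p+1}\times G^{q+1}\to A$ such that for some identity neighbourhood $U$ the restriction of $f$ to $G^{p+1}\times\Gamma_U^q$ is continuous, with differentials $d_h f(x_0,\dots,x_{p+1},\vec y)=\sum_{i=0}^{p+1}(-1)^i f(x_0,\dots,\widehat{x_i},\dots,x_{p+1},\vec y)$ and $d_v f(\vec x,y_0,\dots,y_{q+1})=(-1)^p\sum_{i=0}^{q+1}(-1)^i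 f(\vec x,y_0,\dots,\widehat{y_i},\dots,y_{q+1})$. $G$ acts on these by $(g.f)(\vec x,\vec y)=g.f(g^{-1}\vec x,g^{-1}\vec y)$ (diagonal action on all arguments), and $A_{lc}^{p,q}(G,A)^G$ denotes the fixed points, a sub double complex. $\mathrm{Tot}\,A_{lc}^{*,*}(G,A)^G$ is its total complex, $\mathrm{Tot}^n=\bigoplus_{p+q=n}A_{lc}^{p,q}(G,A)^G$ with differential $d_h+d_v$. The map $j_h^q\colon C_{lc}^q(G,A)\to A_{lc}^{0,q}(G,A)^G\subset \mathrm{Tot}^q$ is the row augmentation $j_h(f)(x_0,\vec y)=f(\vec y)$. *)

theory Defs
  imports "HOL-Analysis.Analysis" "HOL-Library.Function_Algebras"
begin

text \<open>The topological group G is a type 'g of class topological_group_add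
(a not necessarily commutative group, written additively: unit 0, product +, inverse uminus,
with continuous product and inverse). Tuples (g_0,...,g_n) in G^(n+1) are
extensional functions in PiE {..n} (\<lambda>_. UNIV), with the product topology.
Cochains are extensional: they vanish outside the tuple domain.\<close>

definition topological_G_module :: "('g::topological_group_add \<Rightarrow> 'a::topological_ab_group_add \<Rightarrow> 'a) \<Rightarrow> bool" where
  "topological_G_module act \<longleftrightarrow>
     (\<forall>a. act 0 a = a) \<and>
     (\<forall>g h a. act (g + h) a = act g (act h a)) \<and>
     (\<forall>g a b. act g (a + b) = act g a + act g b) \<and>
     continuous_on UNIV (\<lambda>(g, a). act g a)"

definition tuples :: "nat \<Rightarrow> (nat \<Rightarrow> 'g) set" where
  "tuples n = PiE {..n} (\<lambda>_. UNIV)"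

definition tuple_top :: "nat \<Rightarrow> (nat \<Rightarrow> 'g::topological_space) topology" where
  "tuple_top n = product_topology (\<lambda>_. euclidean) {..n}"

text \<open>Delete the i-th entry of an (n+1)-tuple (indices 0..n+1 to 0..n).\<close>
definition face :: "nat \<Rightarrow> nat \<Rightarrow> (nat \<Rightarrow> 'g) \<Rightarrow> (nat \<Rightarrow> 'g)" where
  "face n i x = restrict (\<lambda>j. if j < i then x j else x (Suc j)) {..n}"

definition gtr :: "nat \<Rightarrow> 'g::group_add \<Rightarrow> (nat \<Rightarrow> 'g) \<Rightarrow> (nat \<Rightarrow> 'g)" where
  "gtr n g x = restrict (\<lambda>j. g + x j) {..n}"

definition identity_nbhd :: "'g::topological_group_add set \<Rightarrow> bool" where
  "identity_nbhd U \<longleftrightarrow> (\<exists>V. open V \<and> 0 \<in> V \<and> V \<subseteq> U)"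

definition Gamma :: "'g::group_add set \<Rightarrow> nat \<Rightarrow> (nat \<Rightarrow> 'g) set" where
  "Gamma U p = (if p = 0 then tuples 0
     else {x \<in> tuples p. \<forall>i\<le>p. \<forall>j\<le>p. - x i + x j \<in> U})"

definition altsum :: "nat \<Rightarrow> (nat \<Rightarrow> 'a::ab_group_add) \<Rightarrow> 'a" where
  "altsum m h = (\<Sum>i\<le>m. if even i then h i else - h i)"

definition Clc :: "('g::topological_group_add \<Rightarrow> 'a::topological_ab_group_add \<Rightarrow> 'a) \<Rightarrow> nat
     \<Rightarrow> ((nat \<Rightarrow> 'g) \<Rightarrow> 'a) set" where
  "Clc act n = {f.
     (\<forall>x. x \<notin> tuples n \<longrightarrow> f x = 0) \<and>
     (\<forall>g. \<forall>x\<in>tuples n. act g (f (gtr n (- g) x)) = f x) \<and>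
     (\<exists>U. identity_nbhd U \<and>
        continuous_map (subtopology (tuple_top n) (Gamma U n)) euclidean f)}"

definition dC :: "nat \<Rightarrow> ((nat \<Rightarrow> 'g) \<Rightarrow> 'a::ab_group_add) \<Rightarrow> ((nat \<Rightarrow> 'g) \<Rightarrow> 'a)" where
  "dC n f x = (if x \<in> tuples (Suc n) then altsum (Suc n) (\<lambda>i. f (face n i x)) else 0)"

definition AlcG :: "('g::topological_group_add \<Rightarrow> 'a::topological_ab_group_add \<Rightarrow> 'a) \<Rightarrow> nat \<Rightarrow> nat
     \<Rightarrow> ((nat \<Rightarrow> 'g) \<Rightarrow> (nat \<Rightarrow> 'g) \<Rightarrow> 'a) set" where
  "AlcG act p q = {f.
     (\<forall>x y. \<not> (x \<in> tuples p \<and> y \<in> tuples q) \<longrightarrow> f x y = 0) \<and>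
     (\<forall>g. \<forall>x\<in>tuples p. \<forall>y\<in>tuples q. act g (f (gtr p (- g) x) (gtr q (- g) y)) = f x y) \<and>
     (\<exists>U. identity_nbhd U \<and>
        continuous_map (subtopology (prod_topology (tuple_top p) (tuple_top q))
                                    (tuples p \<times> Gamma U q))
                       euclidean (\<lambda>(x, y). f x y))}"

definition dh :: "nat \<Rightarrow> nat \<Rightarrow> ((nat \<Rightarrow> 'g) \<Rightarrow> (nat \<Rightarrow> 'g) \<Rightarrow> 'a::ab_group_add)
     \<Rightarrow> ((nat \<Rightarrow> 'g) \<Rightarrow> (nat \<Rightarrow> 'g) \<Rightarrow> 'a)" where
  "dh p q f x y = (if x \<in> tuples (Suc p) \<and> y \<in> tuples q
     then altsum (Suc p) (\<lambda>i. f (face p i x) y) else 0)"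

definition dv :: "nat \<Rightarrow> nat \<Rightarrow> ((nat \<Rightarrow> 'g) \<Rightarrow> (nat \<Rightarrow> 'g) \<Rightarrow> 'a::ab_group_add)
     \<Rightarrow> ((nat \<Rightarrow> 'g) \<Rightarrow> (nat \<Rightarrow> 'g) \<Rightarrow> 'a)" where
  "dv p q f x y = (if x \<in> tuples p \<and> y \<in> tuples (Suc q)
     then (let s = altsum (Suc q) (\<lambda>i. f x (face q i y)) in if even p then s else - s) else 0)"

text \<open>Total complex: an element of Tot^n is a family t with t p \<in> A^{p,n-p} for p \<le> n
and t p = 0 for p > n (direct sum over p+q=n).\<close>
definition Tot :: "('g::topological_group_add \<Rightarrow> 'a::topological_ab_group_add \<Rightarrow> 'a) \<Rightarrow> nat
     \<Rightarrow> (nat \<Rightarrow> (nat \<Rightarrow> 'g) \<Rightarrow> (nat \<Rightarrow> 'g) \<Rightarrow> 'a) set" where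
  "Tot act n = {t. (\<forall>p\<le>n. t p \<in> AlcG act p (n - p)) \<and> (\<forall>p>n. t p = 0)}"

definition dTot :: "nat \<Rightarrow> (nat \<Rightarrow> (nat \<Rightarrow> 'g) \<Rightarrow> (nat \<Rightarrow> 'g) \<Rightarrow> 'a::ab_group_add)
     \<Rightarrow> (nat \<Rightarrow> (nat \<Rightarrow> 'g) \<Rightarrow> (nat \<Rightarrow> 'g) \<Rightarrow> 'a)" where
  "dTot n t = (\<lambda>p. if p \<le> Suc n then
       (if 1 \<le> p then dh (p - 1) (Suc n - p) (t (p - 1)) else 0)
     + (if p \<le> n then dv p (n - p) (t p) else 0)
     else 0)"

definition jh :: "nat \<Rightarrow> ((nat \<Rightarrow> 'g) \<Rightarrow> 'a::ab_group_add)
     \<Rightarrow> (nat \<Rightarrow> (nat \<Rightarrow> 'g) \<Rightarrow> (nat \<Rightarrow> 'g) \<Rightarrow> 'a)" where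
  "jh n f = (\<lambda>p. if p = 0 then (\<lambda>x y. if x \<in> tuples 0 \<and> y \<in> tuples n then f y else 0) else 0)"

definition cocycles :: "(nat \<Rightarrow> 'c::ab_group_add set) \<Rightarrow> (nat \<Rightarrow> 'c \<Rightarrow> 'c) \<Rightarrow> nat \<Rightarrow> 'c set" where
  "cocycles C d n = {z \<in> C n. d n z = 0}"

definition coboundaries :: "(nat \<Rightarrow> 'c::ab_group_add set) \<Rightarrow> (nat \<Rightarrow> 'c \<Rightarrow> 'c) \<Rightarrow> nat \<Rightarrow> 'c set" where
  "coboundaries C d n = (if n = 0 then {0} else d (n - 1) ` C (n - 1))"

text \<open>The cochain map \<phi> induces an isomorphism H^n(C) \<rightarrow> H^n(C') for every n, where
H^n = cocycles / coboundaries: injectivity (trivial kernel) and surjectivity of the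
induced homomorphism, written out.\<close>
definition induces_iso_in_cohomology ::
  "(nat \<Rightarrow> 'c::ab_group_add set) \<Rightarrow> (nat \<Rightarrow> 'c \<Rightarrow> 'c) \<Rightarrow>
   (nat \<Rightarrow> 'e::ab_group_add set) \<Rightarrow> (nat \<Rightarrow> 'e \<Rightarrow> 'e) \<Rightarrow> (nat \<Rightarrow> 'c \<Rightarrow> 'e) \<Rightarrow> bool" where
  "induces_iso_in_cohomology C d C' d' \<phi> \<longleftrightarrow>
     (\<forall>n. (\<forall>z\<in>cocycles C d n. \<phi> n z \<in> cocycles C' d' n) \<and>
          (\<forall>z\<in>cocycles C d n. \<phi> n z \<in> coboundaries C' d' n \<longrightarrow> z \<in> coboundaries C d n) \<and>
          (\<forall>z'\<in>cocycles C' d' n. \<exists>z\<in>cocycles C d n. z' - \<phi> n z \<in> coboundaries C' d' n))"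

end

theory Submission
  imports Defs
begin

text \<open>Each row of the double complex (q fixed, differential d_h) is contractible onto its
augmentation C_lc^q: inserting y_0 in front of the horizontal tuple, (h f)(x, y) = f(y_0, x, y),
is a contracting homotopy, and it preserves equivariance and local continuity because y_0 depends
continuously on y and transforms like the other entries. A staircase argument then moves every
total cocycle, modulo coboundaries, into the column p = 0, where d_h-cocycles are exactly the
image of j_h.\<close>

definition alt_sign :: "nat \<Rightarrow> 'a::ab_group_add \<Rightarrow> 'a" where
  "alt_sign i a = (if even i then a else - a)"

lemma altsum_alt_sign: "altsum m h = (\<Sum>i\<le>m. alt_sign i (h i))"
  by (simp add: altsum_def alt_sign_def)

lemma alt_sign_add: "alt_sign i (a + b) = alt_sign i a + alt_sign i b"
  by (simp add: alt_sign_def)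

lemma alt_sign_minus: "alt_sign i (- a) = - alt_sign i a"
  by (simp add: alt_sign_def)

lemma alt_sign_zero [simp]: "alt_sign i 0 = 0"
  by (simp add: alt_sign_def)

lemma alt_sign_alt_sign: "alt_sign i (alt_sign j a) = alt_sign (i + j) a"
  by (auto simp: alt_sign_def)

lemma alt_sign_Suc: "alt_sign (Suc i) a = - alt_sign i a"
  by (simp add: alt_sign_def)

lemma alt_sign_sum: "alt_sign i (sum f A) = (\<Sum>x\<in>A. alt_sign i (f x))"
  by (simp add: alt_sign_def sum_negf)

lemma altsum_add: "altsum m (\<lambda>i. h i + k i) = altsum m h + altsum m k"
  by (simp add: altsum_alt_sign alt_sign_add sum.distrib)

lemma altsum_minus: "altsum m (\<lambda>i. - h i) = - altsum m h"
  by (simp add: altsum_alt_sign alt_sign_minus sum_negf)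

lemma altsum_diff: "altsum m (\<lambda>i. h i - k i) = altsum m h - altsum m k"
  using altsum_add[of m h "\<lambda>i. - k i"] by (simp add: altsum_minus)

lemma altsum_zero [simp]: "altsum m (\<lambda>i. 0) = 0"
  by (simp add: altsum_alt_sign)

lemma altsum_alt_sign_inner: "altsum m (\<lambda>i. alt_sign p (h i)) = alt_sign p (altsum m h)"
  by (simp add: altsum_alt_sign alt_sign_sum alt_sign_alt_sign add.commute)

lemma altsum_Suc: "altsum (Suc m) h = h 0 - altsum m (\<lambda>i. h (Suc i))"
proof -
  have "altsum (Suc m) h = alt_sign 0 (h 0) + (\<Sum>i\<le>m. alt_sign (Suc i) (h (Suc i)))"
    unfolding altsum_alt_sign by (rule sum.atMost_Suc_shift)
  also have "\<dots> = h 0 + - (\<Sum>i\<le>m. alt_sign i (h (Suc i)))"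
    unfolding alt_sign_Suc sum_negf by (simp add: alt_sign_def)
  finally show ?thesis by (simp add: altsum_alt_sign)
qed

lemma altsum_swap_anticommute:
  fixes F :: "nat \<Rightarrow> nat \<Rightarrow> 'a::ab_group_add"
  shows "altsum a (\<lambda>i. alt_sign p (altsum b (F i)))
       + alt_sign (Suc p) (altsum b (\<lambda>j. altsum a (\<lambda>i. F i j))) = 0"
proof -
  have rows: "altsum a (\<lambda>i. alt_sign p (altsum b (F i)))
      = alt_sign p (\<Sum>i\<le>a. \<Sum>j\<le>b. alt_sign (i + j) (F i j))"
    by (simp only: altsum_alt_sign alt_sign_sum alt_sign_alt_sign) (simp only: add_ac)
  have columns: "alt_sign (Suc p) (altsum b (\<lambda>j. altsum a (\<lambda>i. F i j)))
      = - alt_sign p (\<Sum>j\<le>b. \<Sum>i\<le>a. alt_sign (j + i) (F i j))"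
    by (simp only: alt_sign_Suc) (simp only: altsum_alt_sign alt_sign_sum alt_sign_alt_sign)
  have swap: "(\<Sum>j\<le>b. \<Sum>i\<le>a. alt_sign (j + i) (F i j))
      = (\<Sum>i\<le>a. \<Sum>j\<le>b. alt_sign (i + j) (F i j))"
    by (subst sum.swap) (simp only: add.commute)
  show ?thesis unfolding rows columns swap by simp
qed

section \<open>Faces, translations and the simplicial identity\<close>

lemma face_tuples [simp]: "face n i x \<in> tuples n"
  by (simp add: face_def tuples_def)

lemma face_face:
  assumes "i \<le> j"
  shows "face m j (face (Suc m) i x) = face m i (face (Suc m) (Suc j) x)"
  using assms by (auto simp: face_def fun_eq_iff)

lemma gtr_tuples [simp]: "gtr n g x \<in> tuples n"
  by (simp add: gtr_def tuples_def)

lemma gtr_0: "gtr n g x 0 = g + x 0"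
  by (simp add: gtr_def)

lemma face_gtr: "face n i (gtr (Suc n) g x) = gtr n g (face n i x)"
  by (auto simp: face_def gtr_def fun_eq_iff)

text \<open>The terms with i \<le> j cancel against those with j < i via (i, j) \<mapsto> (Suc j, i).\<close>

lemma altsum_faces_faces_eq_0:
  fixes F :: "(nat \<Rightarrow> 'g) \<Rightarrow> 'a::ab_group_add"
  shows "altsum (Suc (Suc m)) (\<lambda>i. altsum (Suc m) (\<lambda>j. F (face m j (face (Suc m) i x)))) = 0"
proof -
  define g where "g = (\<lambda>(i, j). alt_sign (i + j) (F (face m j (face (Suc m) i x))))"
  define P1 where "P1 = {(i, j). i \<le> j \<and> j \<le> Suc m}"
  define P2 where "P2 = {(i, j). j < i \<and> i \<le> Suc (Suc m)}"
  have fin: "finite P1" "finite P2"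
    unfolding P1_def P2_def
    by (rule finite_subset[of _ "{..Suc (Suc m)} \<times> {..Suc m}"], auto)+
  have split: "{..Suc (Suc m)} \<times> {..Suc m} = P1 \<union> P2" "P1 \<inter> P2 = {}"
    by (auto simp: P1_def P2_def)
  have "altsum (Suc (Suc m)) (\<lambda>i. altsum (Suc m) (\<lambda>j. F (face m j (face (Suc m) i x))))
      = sum g ({..Suc (Suc m)} \<times> {..Suc m})"
    by (simp only: altsum_alt_sign alt_sign_sum alt_sign_alt_sign g_def case_prod_conv
        sum.cartesian_product)
  also have "\<dots> = sum g P1 + sum g P2"
    using split fin by (simp add: sum.union_disjoint)
  also have "sum g P2 = sum (\<lambda>ij. g ((\<lambda>(i, j). (Suc j, i)) ij)) P1"
    by (rule sum.reindex_bij_betw[symmetric],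
        rule bij_betwI[where g="\<lambda>(i, j). (j, i - 1)"]) (auto simp: P1_def P2_def)
  also have "\<dots> = - sum g P1"
    unfolding sum_negf[symmetric]
    by (rule sum.cong) (auto simp: P1_def g_def face_face alt_sign_Suc add.commute)
  finally show ?thesis by simp
qed

section \<open>The double complex and its total complex\<close>

lemma dv_alt_sign: "dv p q f x y = (if x \<in> tuples p \<and> y \<in> tuples (Suc q)
     then alt_sign p (altsum (Suc q) (\<lambda>i. f x (face q i y))) else 0)"
  by (simp add: dv_def alt_sign_def Let_def)

lemma dh_dh: "dh (Suc p) q (dh p q f) = 0"
  by (simp add: fun_eq_iff dh_def altsum_faces_faces_eq_0[of _ "\<lambda>z. f z _"])

lemma dv_dv: "dv p (Suc q) (dv p q f) = 0"
  by (simp add: fun_eq_iff dv_alt_sign altsum_alt_sign_inner alt_sign_alt_sign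
      altsum_faces_faces_eq_0[of _ "\<lambda>z. f _ z"])

lemma dv_dh: "dv (Suc p) q (dh p q f) = - dh p (Suc q) (dv p q f)"
proof -
  have "altsum (Suc p) (\<lambda>i. alt_sign p (altsum (Suc q) (\<lambda>j. f (face p i x) (face q j y))))
      + alt_sign (Suc p) (altsum (Suc q) (\<lambda>j. altsum (Suc p) (\<lambda>i. f (face p i x) (face q j y))))
      = 0" for x y
    by (rule altsum_swap_anticommute)
  then show ?thesis
    by (simp add: fun_eq_iff dh_def dv_alt_sign eq_neg_iff_add_eq_0 add.commute)
qed

lemma dh_add: "dh p q (f + g) = dh p q f + dh p q g"
  by (simp add: fun_eq_iff dh_def altsum_add)

lemma dh_diff: "dh p q (f - g) = dh p q f - dh p q g"
  by (simp add: fun_eq_iff dh_def altsum_diff)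

lemma dh_zero [simp]: "dh p q 0 = 0"
  by (simp add: fun_eq_iff dh_def)

lemma dv_add: "dv p q (f + g) = dv p q f + dv p q g"
  by (simp add: fun_eq_iff dv_alt_sign altsum_add alt_sign_add)

lemma dv_diff: "dv p q (f - g) = dv p q f - dv p q g"
  by (simp add: fun_eq_iff dv_alt_sign altsum_diff alt_sign_def)

lemma dv_zero [simp]: "dv p q 0 = 0"
  by (simp add: fun_eq_iff dv_alt_sign)

lemma dTot_add: "dTot n (a + b) = dTot n a + dTot n b"
  by (simp add: fun_eq_iff dTot_def dh_add dv_add)

lemma dTot_diff: "dTot n (a - b) = dTot n a - dTot n b"
  by (simp add: fun_eq_iff dTot_def dh_diff dv_diff)

lemma dTot_zero [simp]: "dTot n 0 = 0"
  by (simp add: fun_eq_iff dTot_def)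

lemma dTot_dTot: "dTot (Suc m) (dTot m s) = 0"
proof
  fix p
  show "dTot (Suc m) (dTot m s) p = 0 p"
  proof (cases "p \<le> Suc m")
    case True
    show ?thesis
    proof (cases p)
      case 0
      then show ?thesis by (simp add: dTot_def dv_dv)
    next
      case (Suc k)
      then obtain j where "m = k + j"
        using True le_Suc_ex by auto
      with Suc show ?thesis
        by (cases k; cases j) (simp_all add: dTot_def dh_add dv_add dv_dh dh_dh dv_dv)
    qed
  next
    case False
    then show ?thesis
      by (cases "p = Suc (Suc m)") (simp_all add: dTot_def dh_dh)
  qed
qed

lemma continuous_map_add_group:
  fixes f :: "'x \<Rightarrow> 'b::topological_monoid_add"
  shows "\<lbrakk>continuous_map X euclidean f; continuous_map X euclidean g\<rbrakk>
         \<Longrightarrow> continuous_map X euclidean (\<lambda>x. f x + g x)"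
  by (simp add: continuous_map_atin tendsto_add)

lemma continuous_map_minus_group:
  fixes f :: "'x \<Rightarrow> 'b::topological_group_add"
  shows "continuous_map X euclidean f \<Longrightarrow> continuous_map X euclidean (\<lambda>x. - f x)"
  by (simp add: continuous_map_atin tendsto_minus)

lemma continuous_map_sum_group:
  fixes f :: "'x \<Rightarrow> 'i \<Rightarrow> 'b::topological_comm_monoid_add"
  shows "\<lbrakk>finite I; \<And>i. i \<in> I \<Longrightarrow> continuous_map X euclidean (\<lambda>x. f x i)\<rbrakk>
         \<Longrightarrow> continuous_map X euclidean (\<lambda>x. sum (f x) I)"
  by (simp add: continuous_map_atin tendsto_sum)

lemma continuous_map_alt_sign:
  fixes f :: "'x \<Rightarrow> 'b::topological_ab_group_add"
  shows "continuous_map X euclidean f \<Longrightarrow> continuous_map X euclidean (\<lambda>x. alt_sign i (f x))"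
  by (simp add: alt_sign_def continuous_map_minus_group)

lemma continuous_map_altsum:
  fixes f :: "'x \<Rightarrow> nat \<Rightarrow> 'b::topological_ab_group_add"
  shows "(\<And>i. i \<le> m \<Longrightarrow> continuous_map X euclidean (\<lambda>x. f x i))
         \<Longrightarrow> continuous_map X euclidean (\<lambda>x. altsum m (f x))"
  unfolding altsum_alt_sign
  by (rule continuous_map_sum_group) (auto intro: continuous_map_alt_sign)

lemma topspace_tuple_top [simp]: "topspace (tuple_top n) = tuples n"
  by (simp add: tuple_top_def tuples_def)

lemma continuous_map_tuple_top:
  assumes "\<And>k. k \<le> n \<Longrightarrow> continuous_map Z euclidean (\<lambda>z. \<phi> z k)"
  shows "continuous_map Z (tuple_top n) (\<lambda>z. restrict (\<phi> z) {..n})"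
  unfolding tuple_top_def continuous_map_componentwise
  using assms by auto

lemma continuous_map_tuple_entry: "k \<le> n \<Longrightarrow> continuous_map (tuple_top n) euclidean (\<lambda>x. x k)"
  unfolding tuple_top_def by (rule continuous_map_product_projection) simp

lemma continuous_map_face: "continuous_map (tuple_top (Suc p)) (tuple_top p) (face p i)"
  unfolding face_def[abs_def]
  by (rule continuous_map_tuple_top) (auto intro: continuous_map_tuple_entry)

lemma Gamma_subset_tuples: "Gamma U q \<subseteq> tuples q"
  by (auto simp: Gamma_def)

lemma Gamma_mono: "U \<subseteq> V \<Longrightarrow> Gamma U q \<subseteq> Gamma V q"
  by (auto simp: Gamma_def)

lemma face_Gamma: "y \<in> Gamma U (Suc q) \<Longrightarrow> face q i y \<in> Gamma U q"
  by (cases q) (auto simp: Gamma_def face_def tuples_def)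

lemma identity_nbhd_Int: "identity_nbhd U \<Longrightarrow> identity_nbhd V \<Longrightarrow> identity_nbhd (U \<inter> V)"
  unfolding identity_nbhd_def by (metis Int_iff Int_mono open_Int)

definition lc_top :: "nat \<Rightarrow> nat \<Rightarrow> 'g::topological_group_add set
    \<Rightarrow> ((nat \<Rightarrow> 'g) \<times> (nat \<Rightarrow> 'g)) topology" where
  "lc_top p q U = subtopology (prod_topology (tuple_top p) (tuple_top q)) (tuples p \<times> Gamma U q)"

lemma topspace_lc_top [simp]: "topspace (lc_top p q U) = tuples p \<times> Gamma U q"
  using Gamma_subset_tuples by (auto simp: lc_top_def)

lemma continuous_map_lc_top_fst: "continuous_map (lc_top p q U) (tuple_top p) fst"
  unfolding lc_top_def by (rule continuous_map_subtopology_fst)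

lemma continuous_map_lc_top_snd: "continuous_map (lc_top p q U) (tuple_top q) snd"
  unfolding lc_top_def by (rule continuous_map_subtopology_snd)

lemma continuous_map_lc_top_compose:
  assumes f: "continuous_map (lc_top p q U) euclidean (\<lambda>(x, y). f x y)"
    and a: "continuous_map Z (tuple_top p) a" and b: "continuous_map Z (tuple_top q) b"
    and into: "\<And>z. z \<in> topspace Z \<Longrightarrow> a z \<in> tuples p \<and> b z \<in> Gamma U q"
  shows "continuous_map Z euclidean (\<lambda>z. f (a z) (b z))"
proof -
  have "continuous_map Z (lc_top p q U) (\<lambda>z. (a z, b z))"
    unfolding lc_top_def
    by (rule continuous_map_into_subtopology) (use a b into in \<open>auto simp: continuous_map_paired\<close>)
  from continuous_map_compose[OF this f] show ?thesis by (simp add: o_def)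
qed

lemma continuous_map_lc_top_mono:
  assumes "U \<subseteq> V" "continuous_map (lc_top p q V) euclidean f"
  shows "continuous_map (lc_top p q U) euclidean f"
proof -
  have "lc_top p q U = subtopology (lc_top p q V) (tuples p \<times> Gamma U q)"
    using Gamma_mono[OF assms(1)] by (auto simp: lc_top_def subtopology_subtopology Int_absorb2
        intro!: arg_cong[where f="subtopology _"])
  with continuous_map_from_subtopology[OF assms(2)] show ?thesis by simp
qed

lemma AlcG_iff: "f \<in> AlcG act p q \<longleftrightarrow>
     (\<forall>x y. \<not> (x \<in> tuples p \<and> y \<in> tuples q) \<longrightarrow> f x y = 0) \<and>
     (\<forall>g. \<forall>x\<in>tuples p. \<forall>y\<in>tuples q. act g (f (gtr p (- g) x) (gtr q (- g) y)) = f x y) \<and>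
     (\<exists>U. identity_nbhd U \<and> continuous_map (lc_top p q U) euclidean (\<lambda>(x, y). f x y))"
  by (simp add: AlcG_def lc_top_def)

lemma AlcG_I:
  assumes "\<And>x y. \<not> (x \<in> tuples p \<and> y \<in> tuples q) \<Longrightarrow> f x y = 0"
    and "\<And>g x y. x \<in> tuples p \<Longrightarrow> y \<in> tuples q \<Longrightarrow>
           act g (f (gtr p (- g) x) (gtr q (- g) y)) = f x y"
    and "identity_nbhd U" and "continuous_map (lc_top p q U) euclidean (\<lambda>(x, y). f x y)"
  shows "f \<in> AlcG act p q"
  using assms unfolding AlcG_iff by blast

context
  fixes act :: "'g::topological_group_add \<Rightarrow> 'a::topological_ab_group_add \<Rightarrow> 'a"
  assumes module: "topological_G_module act"
begin

lemma act_add: "act g (a + b) = act g a + act g b"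
  using module by (simp add: topological_G_module_def)

lemma act_zero: "act g 0 = 0"
  using act_add[of g 0 0] by simp

lemma act_minus: "act g (- a) = - act g a"
  using act_add[of g a "- a"] by (simp add: act_zero eq_neg_iff_add_eq_0 add.commute)

lemma act_alt_sign: "act g (alt_sign i a) = alt_sign i (act g a)"
  by (simp add: alt_sign_def act_minus)

lemma act_altsum: "act g (altsum m h) = altsum m (\<lambda>i. act g (h i))"
proof -
  have "act g (sum f A) = (\<Sum>i\<in>A. act g (f i))" for f :: "nat \<Rightarrow> 'a" and A
    by (induction A rule: infinite_finite_induct) (auto simp: act_zero act_add)
  then show ?thesis by (simp add: altsum_alt_sign act_alt_sign)
qed

lemma AlcG_zero: "0 \<in> AlcG act p q"
  by (auto simp: AlcG_iff act_zero identity_nbhd_def case_prod_unfold intro!: exI[of _ UNIV])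

lemma AlcG_add:
  assumes "f \<in> AlcG act p q" "g \<in> AlcG act p q"
  shows "f + g \<in> AlcG act p q"
proof -
  from assms obtain U V where U: "identity_nbhd U" "continuous_map (lc_top p q U) euclidean (\<lambda>(x, y). f x y)"
    and V: "identity_nbhd V" "continuous_map (lc_top p q V) euclidean (\<lambda>(x, y). g x y)"
    unfolding AlcG_iff by blast
  have "continuous_map (lc_top p q (U \<inter> V)) euclidean (\<lambda>z. (\<lambda>(x, y). f x y) z + (\<lambda>(x, y). g x y) z)"
    by (intro continuous_map_add_group continuous_map_lc_top_mono[OF _ U(2)]
        continuous_map_lc_top_mono[OF _ V(2)]) auto
  then have "continuous_map (lc_top p q (U \<inter> V)) euclidean (\<lambda>(x, y). (f + g) x y)"
    by (simp add: case_prod_unfold)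
  with identity_nbhd_Int[OF U(1) V(1)] show ?thesis
    by (intro AlcG_I) (use assms in \<open>auto simp: AlcG_iff act_add\<close>)
qed

lemma AlcG_minus:
  assumes "f \<in> AlcG act p q"
  shows "- f \<in> AlcG act p q"
proof -
  from assms obtain U where U: "identity_nbhd U" "continuous_map (lc_top p q U) euclidean (\<lambda>(x, y). f x y)"
    unfolding AlcG_iff by blast
  have "continuous_map (lc_top p q U) euclidean (\<lambda>(x, y). (- f) x y)"
    using continuous_map_minus_group[OF U(2)] by (simp add: case_prod_unfold)
  with U(1) show ?thesis
    by (intro AlcG_I) (use assms in \<open>auto simp: AlcG_iff act_minus\<close>)
qed

lemma AlcG_diff: "f \<in> AlcG act p q \<Longrightarrow> g \<in> AlcG act p q \<Longrightarrow> f - g \<in> AlcG act p q"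
  using AlcG_add[of f p q "- g"] AlcG_minus[of g] by simp

lemma dh_AlcG:
  assumes "f \<in> AlcG act p q"
  shows "dh p q f \<in> AlcG act (Suc p) q"
proof -
  from assms obtain U where U: "identity_nbhd U" "continuous_map (lc_top p q U) euclidean (\<lambda>(x, y). f x y)"
    and equiv: "\<forall>g. \<forall>x\<in>tuples p. \<forall>y\<in>tuples q. act g (f (gtr p (- g) x) (gtr q (- g) y)) = f x y"
    unfolding AlcG_iff by blast
  have "continuous_map (lc_top (Suc p) q U) euclidean
      (\<lambda>z. altsum (Suc p) (\<lambda>i. f (face p i (fst z)) (snd z)))"
    by (intro continuous_map_altsum continuous_map_lc_top_compose[OF U(2)]
        continuous_map_compose[OF continuous_map_lc_top_fst continuous_map_face, unfolded o_def]
        continuous_map_lc_top_snd) auto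
  then have "continuous_map (lc_top (Suc p) q U) euclidean (\<lambda>(x, y). dh p q f x y)"
    by (rule continuous_map_eq) (auto simp: dh_def Gamma_subset_tuples[THEN subsetD])
  with U(1) show ?thesis
    by (intro AlcG_I) (use equiv in \<open>auto simp: dh_def act_altsum face_gtr\<close>)
qed

lemma dv_AlcG:
  assumes "f \<in> AlcG act p q"
  shows "dv p q f \<in> AlcG act p (Suc q)"
proof -
  from assms obtain U where U: "identity_nbhd U" "continuous_map (lc_top p q U) euclidean (\<lambda>(x, y). f x y)"
    and equiv: "\<forall>g. \<forall>x\<in>tuples p. \<forall>y\<in>tuples q. act g (f (gtr p (- g) x) (gtr q (- g) y)) = f x y"
    unfolding AlcG_iff by blast
  have "continuous_map (lc_top p (Suc q) U) euclidean
      (\<lambda>z. alt_sign p (altsum (Suc q) (\<lambda>i. f (fst z) (face q i (snd z)))))"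
    by (intro continuous_map_alt_sign continuous_map_altsum
        continuous_map_lc_top_compose[OF U(2)] continuous_map_lc_top_fst
        continuous_map_compose[OF continuous_map_lc_top_snd continuous_map_face, unfolded o_def])
      (auto intro: face_Gamma)
  then have "continuous_map (lc_top p (Suc q) U) euclidean (\<lambda>(x, y). dv p q f x y)"
    by (rule continuous_map_eq) (auto simp: dv_alt_sign Gamma_subset_tuples[THEN subsetD])
  with U(1) show ?thesis
    by (intro AlcG_I) (use equiv in \<open>auto simp: dv_alt_sign act_altsum act_alt_sign face_gtr\<close>)
qed

lemma Tot_zero: "0 \<in> Tot act n"
  by (simp add: Tot_def AlcG_zero)

lemma Tot_add: "a \<in> Tot act n \<Longrightarrow> b \<in> Tot act n \<Longrightarrow> a + b \<in> Tot act n"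
  by (simp add: Tot_def AlcG_add)

lemma Tot_diff: "a \<in> Tot act n \<Longrightarrow> b \<in> Tot act n \<Longrightarrow> a - b \<in> Tot act n"
  by (simp add: Tot_def AlcG_diff)

lemma dTot_Tot:
  assumes t: "t \<in> Tot act n"
  shows "dTot n t \<in> Tot act (Suc n)"
  unfolding Tot_def
proof (intro CollectI conjI allI impI)
  fix p assume p: "p \<le> Suc n"
  have "(if 1 \<le> p then dh (p - 1) (Suc n - p) (t (p - 1)) else 0) \<in> AlcG act p (Suc n - p)"
    using t p dh_AlcG[of "t (p - 1)" "p - 1" "Suc n - p"]
    by (cases p) (auto simp: Tot_def AlcG_zero)
  moreover have "(if p \<le> n then dv p (n - p) (t p) else 0) \<in> AlcG act p (Suc n - p)"
    using t dv_AlcG[of "t p" p "n - p"] by (auto simp: Tot_def AlcG_zero Suc_diff_le)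
  ultimately show "dTot n t p \<in> AlcG act p (Suc n - p)"
    using AlcG_add p by (simp add: dTot_def)
qed (simp add: dTot_def)

lemma zero_in_coboundaries: "0 \<in> coboundaries (Tot act) dTot n"
  by (cases n) (auto simp: coboundaries_def intro!: image_eqI[where x=0] Tot_zero)

end

section \<open>The contracting homotopy of the rows\<close>

definition cons_tuple :: "'g \<Rightarrow> nat \<Rightarrow> (nat \<Rightarrow> 'g) \<Rightarrow> (nat \<Rightarrow> 'g)" where
  "cons_tuple c p x = restrict (\<lambda>j. if j = 0 then c else x (j - 1)) {..Suc p}"

definition singleton_tuple :: "'g \<Rightarrow> (nat \<Rightarrow> 'g)" where
  "singleton_tuple c = restrict (\<lambda>_. c) {..0}"

definition row_homotopy :: "nat \<Rightarrow> nat \<Rightarrow> ((nat \<Rightarrow> 'g) \<Rightarrow> (nat \<Rightarrow> 'g) \<Rightarrow> 'a::zero)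
     \<Rightarrow> ((nat \<Rightarrow> 'g) \<Rightarrow> (nat \<Rightarrow> 'g) \<Rightarrow> 'a)" where
  "row_homotopy p q f = (\<lambda>x y. if x \<in> tuples p \<and> y \<in> tuples q then f (cons_tuple (y 0) p x) y else 0)"

text \<open>The homotopy out of the column p = 0, landing in the augmentation C_lc^q.\<close>

definition row_retraction :: "nat \<Rightarrow> ((nat \<Rightarrow> 'g) \<Rightarrow> (nat \<Rightarrow> 'g) \<Rightarrow> 'a::zero) \<Rightarrow> ((nat \<Rightarrow> 'g) \<Rightarrow> 'a)" where
  "row_retraction q f = (\<lambda>y. if y \<in> tuples q then f (singleton_tuple (y 0)) y else 0)"

definition augment :: "nat \<Rightarrow> ((nat \<Rightarrow> 'g) \<Rightarrow> 'a::zero) \<Rightarrow> ((nat \<Rightarrow> 'g) \<Rightarrow> (nat \<Rightarrow> 'g) \<Rightarrow> 'a)" where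
  "augment n c = (\<lambda>x y. if x \<in> tuples 0 \<and> y \<in> tuples n then c y else 0)"

lemma jh_augment: "jh n c = (\<lambda>p. if p = 0 then augment n c else 0)"
  by (simp add: jh_def augment_def fun_eq_iff)

lemma cons_tuple_tuples [simp]: "cons_tuple c p x \<in> tuples (Suc p)"
  by (simp add: cons_tuple_def tuples_def)

lemma singleton_tuple_tuples [simp]: "singleton_tuple c \<in> tuples 0"
  by (simp add: singleton_tuple_def tuples_def)

lemma face_0_cons_tuple: "x \<in> tuples p \<Longrightarrow> face p 0 (cons_tuple c p x) = x"
  by (auto simp: face_def cons_tuple_def fun_eq_iff tuples_def PiE_def extensional_def)

lemma face_Suc_cons_tuple: "face (Suc p) (Suc i) (cons_tuple c (Suc p) x) = cons_tuple c p (face p i x)"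
  by (auto simp: face_def cons_tuple_def fun_eq_iff)

lemma face_1_cons_tuple: "face 0 (Suc 0) (cons_tuple c 0 x) = singleton_tuple c"
  by (auto simp: face_def cons_tuple_def fun_eq_iff singleton_tuple_def)

lemma cons_tuple_gtr: "cons_tuple (g + c) p (gtr p g x) = gtr (Suc p) g (cons_tuple c p x)"
  by (auto simp: cons_tuple_def gtr_def fun_eq_iff)

lemma singleton_tuple_gtr: "singleton_tuple (g + c) = gtr 0 g (singleton_tuple c)"
  by (auto simp: singleton_tuple_def gtr_def fun_eq_iff)

lemma dh_row_homotopy:
  assumes supp: "\<forall>x y. \<not> (x \<in> tuples (Suc p) \<and> y \<in> tuples q) \<longrightarrow> f x y = 0"
    and cocycle: "dh (Suc p) q f = 0"
  shows "dh p q (row_homotopy p q f) = f"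
proof (intro ext)
  fix x y
  show "dh p q (row_homotopy p q f) x y = f x y"
  proof (cases "x \<in> tuples (Suc p) \<and> y \<in> tuples q")
    case True
    have "dh (Suc p) q f (cons_tuple (y 0) (Suc p) x) y = 0"
      using cocycle by simp
    with True show ?thesis
      by (simp add: dh_def row_homotopy_def altsum_Suc face_0_cons_tuple face_Suc_cons_tuple)
  qed (use supp in \<open>auto simp: dh_def\<close>)
qed

lemma augment_row_retraction:
  assumes supp: "\<forall>x y. \<not> (x \<in> tuples 0 \<and> y \<in> tuples q) \<longrightarrow> f x y = 0"
    and cocycle: "dh 0 q f = 0"
  shows "augment q (row_retraction q f) = f"
proof (intro ext)
  fix x y
  show "augment q (row_retraction q f) x y = f x y"
  proof (cases "x \<in> tuples 0 \<and> y \<in> tuples q")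
    case True
    have "dh 0 q f (cons_tuple (y 0) 0 x) y = 0"
      using cocycle by simp
    with True show ?thesis
      by (simp add: dh_def augment_def row_retraction_def altsum_Suc face_0_cons_tuple
          face_1_cons_tuple altsum_def)
  qed (use supp in \<open>auto simp: augment_def\<close>)
qed

lemma augment_inj:
  assumes "\<forall>y. y \<notin> tuples n \<longrightarrow> c y = 0" "\<forall>y. y \<notin> tuples n \<longrightarrow> d y = 0"
    and "augment n c = augment n d"
  shows "c = d"
proof
  fix y
  show "c y = d y"
  proof (cases "y \<in> tuples n")
    case True
    have "augment n c (singleton_tuple (y 0)) y = augment n d (singleton_tuple (y 0)) y"
      using assms(3) by simp
    with True show ?thesis by (simp add: augment_def)
  qed (use assms in auto)
qed

lemma dv_augment: "dv 0 n (augment n c) = augment (Suc n) (dC n c)"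
  by (simp add: fun_eq_iff dv_alt_sign augment_def dC_def alt_sign_def)

lemma dh_augment: "dh 0 n (augment n c) = 0"
  by (simp add: fun_eq_iff dh_def augment_def altsum_Suc altsum_def)

lemma dTot_jh: "dTot n (jh n c) = jh (Suc n) (dC n c)"
proof
  fix p
  show "dTot n (jh n c) p = jh (Suc n) (dC n c) p"
    by (cases p; cases n) (simp_all add: dTot_def jh_augment dv_augment dh_augment)
qed

lemma jh_zero [simp]: "jh n 0 = 0"
  by (simp add: jh_def fun_eq_iff)

lemma jh_inj:
  assumes "\<forall>y. y \<notin> tuples n \<longrightarrow> c y = 0" "\<forall>y. y \<notin> tuples n \<longrightarrow> d y = 0"
    and "jh n c = jh n d"
  shows "c = d"
  using augment_inj[OF assms(1,2)] fun_cong[OF assms(3), of 0] by (simp add: jh_augment)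

lemma continuous_map_cons_tuple:
  "continuous_map (lc_top p q U) (tuple_top (Suc p)) (\<lambda>z. cons_tuple (snd z 0) p (fst z))"
  unfolding cons_tuple_def
proof (rule continuous_map_tuple_top)
  fix k assume k: "k \<le> Suc p"
  show "continuous_map (lc_top p q U) euclidean (\<lambda>z. if k = 0 then snd z 0 else fst z (k - 1))"
  proof (cases "k = 0")
    case True
    then show ?thesis
      using continuous_map_compose[OF continuous_map_lc_top_snd continuous_map_tuple_entry[of 0 q]]
      by (simp add: o_def)
  next
    case False
    with k have "k - 1 \<le> p" by simp
    with False show ?thesis
      using continuous_map_compose[OF continuous_map_lc_top_fst continuous_map_tuple_entry[of "k - 1" p]]
      by (simp add: o_def)
  qed
qed

context
  fixes act :: "'g::topological_group_add \<Rightarrow> 'a::topological_ab_group_add \<Rightarrow> 'a"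
  assumes module: "topological_G_module act"
begin

lemma row_homotopy_AlcG:
  assumes "f \<in> AlcG act (Suc p) q"
  shows "row_homotopy p q f \<in> AlcG act p q"
proof -
  from assms obtain U where U: "identity_nbhd U"
      "continuous_map (lc_top (Suc p) q U) euclidean (\<lambda>(x, y). f x y)"
    and equiv: "\<forall>g. \<forall>x\<in>tuples (Suc p). \<forall>y\<in>tuples q.
                   act g (f (gtr (Suc p) (- g) x) (gtr q (- g) y)) = f x y"
    unfolding AlcG_iff by blast
  have "continuous_map (lc_top p q U) euclidean (\<lambda>z. f (cons_tuple (snd z 0) p (fst z)) (snd z))"
    by (rule continuous_map_lc_top_compose[OF U(2) continuous_map_cons_tuple
          continuous_map_lc_top_snd]) auto
  then have "continuous_map (lc_top p q U) euclidean (\<lambda>(x, y). row_homotopy p q f x y)"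
    by (rule continuous_map_eq) (auto simp: row_homotopy_def Gamma_subset_tuples[THEN subsetD])
  with U(1) show ?thesis
    by (intro AlcG_I) (use equiv in \<open>auto simp: row_homotopy_def gtr_0 cons_tuple_gtr\<close>)
qed

lemma row_retraction_Clc:
  assumes "f \<in> AlcG act 0 q"
  shows "row_retraction q f \<in> Clc act q"
proof -
  from assms obtain U where U: "identity_nbhd U"
      "continuous_map (lc_top 0 q U) euclidean (\<lambda>(x, y). f x y)"
    and equiv: "\<forall>g. \<forall>x\<in>tuples 0. \<forall>y\<in>tuples q. act g (f (gtr 0 (- g) x) (gtr q (- g) y)) = f x y"
    unfolding AlcG_iff by blast
  let ?Z = "subtopology (tuple_top q) (Gamma U q)"
  have "continuous_map ?Z (tuple_top 0) (\<lambda>y. singleton_tuple (y 0))"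
    unfolding singleton_tuple_def
    by (rule continuous_map_tuple_top)
      (rule continuous_map_from_subtopology[OF continuous_map_tuple_entry], simp)
  moreover have "continuous_map ?Z (tuple_top q) (\<lambda>y. y)"
    by (rule continuous_map_from_subtopology[OF continuous_map_id[unfolded id_def]])
  ultimately have "continuous_map ?Z euclidean (\<lambda>y. f (singleton_tuple (y 0)) y)"
    by (rule continuous_map_lc_top_compose[OF U(2)]) (use Gamma_subset_tuples in auto)
  then have "continuous_map ?Z euclidean (row_retraction q f)"
    by (rule continuous_map_eq) (use Gamma_subset_tuples in \<open>auto simp: row_retraction_def\<close>)
  with U(1) equiv show ?thesis
    unfolding Clc_def by (auto simp: row_retraction_def gtr_0 singleton_tuple_gtr)
qed

lemma augment_AlcG:
  assumes "c \<in> Clc act n"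
  shows "augment n c \<in> AlcG act 0 n"
proof -
  from assms obtain U where U: "identity_nbhd U"
      "continuous_map (subtopology (tuple_top n) (Gamma U n)) euclidean c"
    and equiv: "\<forall>g. \<forall>x\<in>tuples n. act g (c (gtr n (- g) x)) = c x"
    unfolding Clc_def by blast
  have "continuous_map (lc_top 0 n U) (subtopology (tuple_top n) (Gamma U n)) snd"
    by (rule continuous_map_into_subtopology[OF continuous_map_lc_top_snd]) auto
  from continuous_map_compose[OF this U(2)]
  have "continuous_map (lc_top 0 n U) euclidean (\<lambda>(x, y). augment n c x y)"
    by (rule continuous_map_eq) (auto simp: augment_def Gamma_subset_tuples[THEN subsetD])
  with U(1) show ?thesis
    by (intro AlcG_I) (use equiv in \<open>auto simp: augment_def\<close>)
qed

lemma jh_Tot: "c \<in> Clc act n \<Longrightarrow> jh n c \<in> Tot act n"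
  by (auto simp: Tot_def jh_augment augment_AlcG AlcG_zero[OF module])

section \<open>The staircase argument\<close>

definition single_component :: "nat \<Rightarrow> 'e::zero \<Rightarrow> (nat \<Rightarrow> 'e)" where
  "single_component k f = (\<lambda>p. if p = k then f else 0)"

text \<open>The top component t_{k+1} is a d_h-cocycle, hence d_h of its row homotopy; subtracting the
total coboundary of that primitive kills it.\<close>

lemma Tot_lower_support:
  assumes t: "t \<in> Tot act (Suc m)" and k: "k \<le> m"
    and top: "\<forall>p > Suc k. t p = 0"
    and d_top: "dTot (Suc m) t (Suc (Suc k)) = 0"
  obtains s where "s \<in> Tot act m" "t - dTot m s \<in> Tot act (Suc m)" "\<forall>p > k. (t - dTot m s) p = 0"
proof -
  have tk: "t (Suc k) \<in> AlcG act (Suc k) (m - k)"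
    using t k by (auto simp: Tot_def)
  have cocycle: "dh (Suc k) (m - k) (t (Suc k)) = 0"
    using d_top top k by (cases "Suc k \<le> m") (simp_all add: dTot_def)
  define s0 where "s0 = row_homotopy k (m - k) (t (Suc k))"
  have s0: "s0 \<in> AlcG act k (m - k)"
    unfolding s0_def by (rule row_homotopy_AlcG[OF tk])
  have primitive: "dh k (m - k) s0 = t (Suc k)"
    unfolding s0_def by (rule dh_row_homotopy[OF _ cocycle]) (use tk in \<open>simp add: AlcG_iff\<close>)
  define s where "s = single_component k s0"
  have s: "s \<in> Tot act m"
    using k s0 by (auto simp: s_def Tot_def single_component_def AlcG_zero[OF module])
  have "(t - dTot m s) p = 0" if "p > k" for p
    using that top primitive k
    by (cases "p = Suc k") (auto simp: s_def dTot_def single_component_def Suc_diff_le)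
  with s Tot_diff[OF module t dTot_Tot[OF module s]] show thesis
    using that by blast
qed

lemma Tot_eq_jh_mod_coboundaries_below:
  assumes "t \<in> Tot act n" "dTot n t = jh (Suc n) z" "\<forall>p > k. t p = 0"
  shows "\<exists>c \<in> Clc act n. t - jh n c \<in> coboundaries (Tot act) dTot n"
  using assms
proof (induction k arbitrary: t)
  case 0
  then have t0: "t 0 \<in> AlcG act 0 n"
    by (auto simp: Tot_def)
  have "dTot n t (Suc 0) = 0"
    using "0.prems"(2) by (simp add: jh_def)
  moreover have "t (Suc 0) = 0"
    using "0.prems"(3) by blast
  ultimately have "dh 0 n (t 0) = 0"
    by (cases n) (simp_all add: dTot_def)
  then have "augment n (row_retraction n (t 0)) = t 0"
    by (rule augment_row_retraction[rotated]) (use t0 in \<open>simp add: AlcG_iff\<close>)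
  then have "t = jh n (row_retraction n (t 0))"
    using "0.prems"(3) by (auto simp: fun_eq_iff jh_augment)
  then show ?case
    using row_retraction_Clc[OF t0] zero_in_coboundaries[OF module] by (metis diff_self)
next
  case (Suc k)
  show ?case
  proof (cases "Suc k \<le> n")
    case False
    then show ?thesis
      using Suc by (auto simp: Tot_def)
  next
    case True
    then obtain m where n: "n = Suc m" and km: "k \<le> m"
      by (cases n) auto
    have "dTot (Suc m) t (Suc (Suc k)) = 0"
      using Suc.prems(2) n by (simp add: jh_def)
    then obtain s where s: "s \<in> Tot act m" and t': "t - dTot m s \<in> Tot act (Suc m)"
        and below: "\<forall>p > k. (t - dTot m s) p = 0"
      using Tot_lower_support Suc.prems(1,3) km n by blast
    have "dTot n (t - dTot m s) = jh (Suc n) z"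
      using Suc.prems(2) n by (simp add: dTot_diff dTot_dTot)
    then obtain c b where c: "c \<in> Clc act n" and b: "b \<in> Tot act m"
        and "(t - dTot m s) - jh n c = dTot m b"
      using Suc.IH t' below n by (fastforce simp: coboundaries_def)
    then have "t - jh n c = dTot m (b + s)"
      by (simp add: dTot_add algebra_simps)
    then show ?thesis
      using c Tot_add[OF module b s] n by (metis coboundaries_def diff_Suc_1 image_eqI nat.discI)
  qed
qed

text \<open>With z = 0 this gives surjectivity in cohomology; applied to a primitive of j_h z it gives
injectivity.\<close>

lemma Tot_eq_jh_mod_coboundaries:
  assumes t: "t \<in> Tot act n" and dt: "dTot n t = jh (Suc n) z"
    and z: "\<forall>y. y \<notin> tuples (Suc n) \<longrightarrow> z y = 0"
  obtains c where "c \<in> Clc act n" "dC n c = z" "t - jh n c \<in> coboundaries (Tot act) dTot n"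
proof -
  obtain c where c: "c \<in> Clc act n" and cb: "t - jh n c \<in> coboundaries (Tot act) dTot n"
    using Tot_eq_jh_mod_coboundaries_below[OF t dt, of n] t by (auto simp: Tot_def)
  have "dTot n (t - jh n c) = 0"
    using cb by (cases n) (auto simp: coboundaries_def dTot_dTot)
  then have "jh (Suc n) (dC n c) = jh (Suc n) z"
    by (simp add: dTot_diff dTot_jh dt)
  then have "dC n c = z"
    by (rule jh_inj[rotated 2]) (use z in \<open>auto simp: dC_def\<close>)
  with c cb that show thesis by blast
qed

end

theorem mainTheorem1:
  fixes act :: "'g::topological_group_add \<Rightarrow> 'a::topological_ab_group_add \<Rightarrow> 'a"
  assumes "topological_G_module act"
  shows "induces_iso_in_cohomology (Clc act) dC (Tot act) dTot jh"
  unfolding induces_iso_in_cohomology_def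
proof (intro allI conjI ballI impI)
  fix n z assume "z \<in> cocycles (Clc act) dC n"
  then show "jh n z \<in> cocycles (Tot act) dTot n"
    using jh_Tot[OF assms] by (simp add: cocycles_def dTot_jh)
next
  fix n z assume z: "z \<in> cocycles (Clc act) dC n"
    and jh_cb: "jh n z \<in> coboundaries (Tot act) dTot n"
  show "z \<in> coboundaries (Clc act) dC n"
  proof (cases n)
    case 0
    then have "jh 0 z = jh 0 0"
      using jh_cb by (simp add: coboundaries_def)
    then show ?thesis
      using 0 z by (auto simp: coboundaries_def cocycles_def Clc_def intro: jh_inj)
  next
    case (Suc m)
    obtain w where w: "w \<in> Tot act m" and dw: "dTot m w = jh (Suc m) z"
      using jh_cb Suc by (auto simp: coboundaries_def)
    have "\<forall>y. y \<notin> tuples (Suc m) \<longrightarrow> z y = 0"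
      using z Suc by (simp add: cocycles_def Clc_def)
    then obtain c where "c \<in> Clc act m" "dC m c = z"
      using Tot_eq_jh_mod_coboundaries[OF assms w dw] by blast
    then show ?thesis using Suc by (auto simp: coboundaries_def)
  qed
next
  fix n t assume "t \<in> cocycles (Tot act) dTot n"
  then show "\<exists>c\<in>cocycles (Clc act) dC n. t - jh n c \<in> coboundaries (Tot act) dTot n"
    using Tot_eq_jh_mod_coboundaries[OF assms, of t n 0] by (auto simp: cocycles_def)
qed

end
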